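(* Let $\mathbf{u}$ be a quasi-definite linear functional with SMOP $(P_n)_{n\ge0}$ and associated polynomials of the first kind $(P^{(1)}_n)_{n\ge0}$, let $c\in\mathbb{C}$, and let $\widehat{\mathbf{u}}$ be a linear functional with $\mathbf{u}=(x-c)^2\widehat{\mathbf{u}}$. Put $S_n(x)=(\widehat{\mathbf{u}}_1-c\widehat{\mathbf{u}}_0)P_n(x)+\mathbf{u}_0P^{(1)}_{n-1}(x)$ for $n\ge0$ and, for $n\ge2$, $$d_n^*=\det\begin{pmatrix}S_{n-2}(c)&S_{n-1}(c)\\ S_{n-2}'(c)+\widehat{\mathbf{u}}_0P_{n-2}(c)&S_{n-1}'(c)+\widehat{\mathbf{u}}_0P_{n-1}(c)\end{pmatrix}.$$ Then $\widehat{\mathbf{u}}$ is quasi-definite if and only if $\widehat{\mathbf{u}}_0\neq0$ and $d_n^*\neq0$ for all $n\ge2$. In that case its SMOP $(Q_n)_{n\ge0}$ is given by $Q_0=1$, $Q_1(x)=x-\widehat{\mathbf{u}}_1/\widehat{\mathbf{u}}_0$, and for $n\ge2$ $$Q_n(x)=\frac{1}{d_n^*}\det\begin{pmatrix}P_n(x)&P_{n-1}(x)&P_{n-2}(x)\\ S_n'(c)+\widehat{\mathbf{u}}_0P_n(c)&S_{n-1}'(c)+\widehat{\mathbf{u}}_0P_{n-1}(c)&S_{n-2}'(c)+\widehat{\mathbf{u}}_0P_{n-2}(c)\\ S_n(c)&S_{n-1}(c)&S_{n-2}(c)\end{pmatrix}.$$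
   Context: Linear functionals on the complex polynomials $\mathbb{P}$, moments $\mathbf{u}_n=\langle\mathbf{u},x^n\rangle$, $\langle(x-c)^2\widehat{\mathbf{u}},p\rangle=\langle\widehat{\mathbf{u}},(x-c)^2p\rangle$. A functional is quasi-definite if all leading principal submatrices of its Hankel moment matrix $(\mathbf{u}_{i+j})_{i,j\ge0}$ are nonsingular; it then has a unique sequence of monic orthogonal polynomials (SMOP) $(P_n)$, $\deg P_n=n$, $\langle\mathbf{u},P_nP_m\rangle=K_n\delta_{nm}$, $K_n\ne0$, with recurrence $xP_n=P_{n+1}+b_nP_n+a_nP_{n-1}$, $P_{-1}=0,P_0=1$, $a_n\neq0$. The associated polynomials of the first kind are the monic polynomials with $xP^{(1)}_n=P^{(1)}_{n+1}+b_{n+1}P^{(1)}_n+a_{n+1}P^{(1)}_{n-1}$, $P^{(1)}_{-1}=0$, $P^{(1)}_0=1$. *)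

theory Defs
  imports "Jordan_Normal_Form.Determinant" "HOL-Computational_Algebra.Polynomial"
begin

text \<open>A linear functional on complex polynomials is represented by its moment
  sequence; its action on a polynomial is obtained by linearity.\<close>

definition lf :: "(nat \<Rightarrow> complex) \<Rightarrow> complex poly \<Rightarrow> complex" where
  "lf u p = (\<Sum>i\<le>degree p. coeff p i * u i)"

definition hankel :: "(nat \<Rightarrow> complex) \<Rightarrow> nat \<Rightarrow> complex mat" where
  "hankel u n = mat n n (\<lambda>(i, j). u (i + j))"

definition quasi_definite :: "(nat \<Rightarrow> complex) \<Rightarrow> bool" where
  "quasi_definite u \<longleftrightarrow> (\<forall>n. det (hankel u (Suc n)) \<noteq> 0)"

definition is_SMOP :: "(nat \<Rightarrow> complex) \<Rightarrow> (nat \<Rightarrow> complex poly) \<Rightarrow> bool" where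
  "is_SMOP u P \<longleftrightarrow>
     (\<forall>n. degree (P n) = n \<and> lead_coeff (P n) = 1) \<and>
     (\<forall>n m. n \<noteq> m \<longrightarrow> lf u (P n * P m) = 0) \<and>
     (\<forall>n. lf u (P n * P n) \<noteq> 0)"

fun assoc1 :: "(nat \<Rightarrow> complex) \<Rightarrow> (nat \<Rightarrow> complex) \<Rightarrow> nat \<Rightarrow> complex poly" where
  "assoc1 a b 0 = 1"
| "assoc1 a b (Suc 0) = [:- b 1, 1:]"
| "assoc1 a b (Suc (Suc n)) =
     [:- b (Suc (Suc n)), 1:] * assoc1 a b (Suc n) - smult (a (Suc (Suc n))) (assoc1 a b n)"

text \<open>P1m a b n = P^{(1)}_{n-1}, with P^{(1)}_{-1} = 0.\<close>
definition P1m :: "(nat \<Rightarrow> complex) \<Rightarrow> (nat \<Rightarrow> complex) \<Rightarrow> nat \<Rightarrow> complex poly" where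
  "P1m a b n = (if n = 0 then 0 else assoc1 a b (n - 1))"

definition Spoly :: "(nat \<Rightarrow> complex) \<Rightarrow> (nat \<Rightarrow> complex) \<Rightarrow> complex
    \<Rightarrow> (nat \<Rightarrow> complex poly) \<Rightarrow> (nat \<Rightarrow> complex) \<Rightarrow> (nat \<Rightarrow> complex) \<Rightarrow> nat \<Rightarrow> complex poly" where
  "Spoly u uh c P a b n = smult (uh 1 - c * uh 0) (P n) + smult (u 0) (P1m a b n)"

definition Tval :: "(nat \<Rightarrow> complex) \<Rightarrow> (nat \<Rightarrow> complex) \<Rightarrow> complex
    \<Rightarrow> (nat \<Rightarrow> complex poly) \<Rightarrow> (nat \<Rightarrow> complex) \<Rightarrow> (nat \<Rightarrow> complex) \<Rightarrow> nat \<Rightarrow> complex" where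
  "Tval u uh c P a b n = poly (pderiv (Spoly u uh c P a b n)) c + uh 0 * poly (P n) c"

definition dstar :: "(nat \<Rightarrow> complex) \<Rightarrow> (nat \<Rightarrow> complex) \<Rightarrow> complex
    \<Rightarrow> (nat \<Rightarrow> complex poly) \<Rightarrow> (nat \<Rightarrow> complex) \<Rightarrow> (nat \<Rightarrow> complex) \<Rightarrow> nat \<Rightarrow> complex" where
  "dstar u uh c P a b n = det (mat_of_rows_list 2
     [[poly (Spoly u uh c P a b (n - 2)) c, poly (Spoly u uh c P a b (n - 1)) c],
      [Tval u uh c P a b (n - 2), Tval u uh c P a b (n - 1)]])"

definition Qhat :: "(nat \<Rightarrow> complex) \<Rightarrow> (nat \<Rightarrow> complex) \<Rightarrow> complex
    \<Rightarrow> (nat \<Rightarrow> complex poly) \<Rightarrow> (nat \<Rightarrow> complex) \<Rightarrow> (nat \<Rightarrow> complex) \<Rightarrow> nat \<Rightarrow> complex poly" where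
  "Qhat u uh c P a b n =
    (if n = 0 then 1
     else if n = 1 then [:- (uh 1 / uh 0), 1:]
     else smult (1 / dstar u uh c P a b n)
       (det (mat_of_rows_list 3
          [[P n, P (n - 1), P (n - 2)],
           [[:Tval u uh c P a b n:], [:Tval u uh c P a b (n - 1):], [:Tval u uh c P a b (n - 2):]],
           [[:poly (Spoly u uh c P a b n) c:], [:poly (Spoly u uh c P a b (n - 1)) c:],
            [:poly (Spoly u uh c P a b (n - 2)) c:]]])))"

end

theory Submission
  imports Defs
begin

text \<open>Since \<open>u = (x - c)\<^sup>2 uh\<close>, the functional \<open>uh\<close> is determined on the ideal generated by
  \<open>(x - c)\<^sup>2\<close>, and its two remaining degrees of freedom are captured by the moments
  \<open>uh(P\<^sub>n) = S\<^sub>n'(c) + uh\<^sub>0 P\<^sub>n(c)\<close> and \<open>uh((x - c) P\<^sub>n) = S\<^sub>n(c)\<close>, which follow by induction from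
  the three-term recurrence. Writing a polynomial of degree \<open>< n\<close> as \<open>k\<^sub>0 + k\<^sub>1 (x - c) + (x - c)\<^sup>2 r\<close>
  shows that \<open>P\<^sub>n + \<alpha> P\<^sub>n\<^sub>-\<^sub>1 + \<beta> P\<^sub>n\<^sub>-\<^sub>2\<close> is \<open>uh\<close>-orthogonal to all lower degrees iff its
  \<open>uh\<close>-moments against \<open>1\<close> and \<open>x - c\<close> vanish: a \<open>2 \<times> 2\<close> system with determinant \<open>d\<^sub>n\<^sup>*\<close>, whose
  Cramer solution is the determinant formula for \<open>Q\<^sub>n\<close>. Conversely a singular system yields a
  nonzero polynomial of degree \<open>< n\<close> orthogonal to all of degree \<open>< n\<close>. Finally
  \<open>uh(Q\<^sub>n\<^sup>2) = uh(Q\<^sub>n (x - c)\<^sup>2 P\<^sub>n\<^sub>-\<^sub>2) = \<beta> u(P\<^sub>n\<^sub>-\<^sub>2\<^sup>2)\<close> with \<open>\<beta> = d\<^sub>n\<^sub>+\<^sub>1\<^sup>*/d\<^sub>n\<^sup>*\<close>.\<close>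

section \<open>Linear functionals on polynomials\<close>

lemma lf_eq_sum_lessThan: "degree p < N \<Longrightarrow> lf v p = (\<Sum>i<N. coeff p i * v i)"
  unfolding lf_def by (rule sum.mono_neutral_left) (auto simp: coeff_eq_0)

lemma lf_add: "lf v (p + q) = lf v p + lf v q"
proof -
  have "degree (p + q) < Suc (max (degree p) (degree q))"
    using degree_add_le_max[of p q] by simp
  then show ?thesis
    by (simp add: lf_eq_sum_lessThan[of _ "Suc (max (degree p) (degree q))"] sum.distrib algebra_simps)
qed

lemma lf_diff: "lf v (p - q) = lf v p - lf v q"
proof -
  have "degree (p - q) < Suc (max (degree p) (degree q))"
    using degree_diff_le_max[of p q] by simp
  then show ?thesis
    by (simp add: lf_eq_sum_lessThan[of _ "Suc (max (degree p) (degree q))"]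
        sum_subtractf algebra_simps)
qed

lemma lf_smult: "lf v (smult k p) = k * lf v p"
  unfolding lf_def by (simp add: sum_distrib_left algebra_simps)

lemma lf_0 [simp]: "lf v 0 = 0"
  unfolding lf_def by simp

lemma lf_sum: "finite A \<Longrightarrow> lf v (\<Sum>x\<in>A. f x) = (\<Sum>x\<in>A. lf v (f x))"
  by (induction A rule: finite_induct) (auto simp: lf_add)

lemma lf_const [simp]: "lf v [:k:] = k * v 0"
  unfolding lf_def by simp

lemma lf_1 [simp]: "lf v 1 = v 0"
  using lf_const[of v 1] by (simp add: one_pCons)

lemma lf_linear: "lf v [:k\<^sub>0, k\<^sub>1:] = k\<^sub>0 * v 0 + k\<^sub>1 * v 1"
  by (subst lf_eq_sum_lessThan[of _ 2]) (auto simp: numeral_2_eq_2 degree_pCons_le le_less_trans)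

lemma lf_quadratic: "lf v [:k\<^sub>0, k\<^sub>1, k\<^sub>2:] = k\<^sub>0 * v 0 + k\<^sub>1 * v 1 + k\<^sub>2 * v 2"
  by (subst lf_eq_sum_lessThan[of _ 3])
    (auto simp: numeral_3_eq_3 numeral_2_eq_2 degree_pCons_le le_less_trans lessThan_Suc)

lemma lf_monom_mult:
  assumes "degree q < N"
  shows "lf v (monom 1 k * q) = (\<Sum>j<N. coeff q j * v (j + k))"
proof -
  have "degree (monom 1 k * q) < k + N"
    using assms by (cases "q = 0") (simp_all add: degree_mult_eq degree_monom_eq)
  then have "lf v (monom 1 k * q) = (\<Sum>i<k + N. coeff (monom 1 k * q) i * v i)"
    by (rule lf_eq_sum_lessThan)
  also have "\<dots> = (\<Sum>i<k. coeff (monom 1 k * q) i * v i)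
      + (\<Sum>i=k..<k + N. coeff (monom 1 k * q) i * v i)"
    by (simp add: sum.atLeastLessThan_concat[symmetric] lessThan_atLeast0 flip: atLeast0LessThan)
  also have "(\<Sum>i<k. coeff (monom 1 k * q) i * v i) = 0"
    by (simp add: coeff_monom_mult)
  also have "(\<Sum>i=k..<k + N. coeff (monom 1 k * q) i * v i) = (\<Sum>j=0..<N. coeff q j * v (j + k))"
    using sum.shift_bounds_nat_ivl[of "\<lambda>i. coeff (monom 1 k * q) i * v i" 0 k N]
    by (simp add: coeff_monom_mult add.commute)
  finally show ?thesis
    by (simp add: atLeast0LessThan)
qed

section \<open>Quasi-definiteness and monic orthogonal sequences\<close>

definition lf_nondegenerate :: "(nat \<Rightarrow> complex) \<Rightarrow> nat \<Rightarrow> bool" where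
  "lf_nondegenerate v n \<longleftrightarrow>
     (\<forall>q. degree q < n \<longrightarrow> (\<forall>p. degree p < n \<longrightarrow> lf v (q * p) = 0) \<longrightarrow> q = 0)"

lemma hankel_mult_vec_nth:
  assumes "degree q < n" "k < n" "dim_vec x = n" "\<And>j. j < n \<Longrightarrow> x $ j = coeff q j"
  shows "(hankel v n *\<^sub>v x) $ k = lf v (monom 1 k * q)"
proof -
  have "(hankel v n *\<^sub>v x) $ k = (\<Sum>j<n. v (k + j) * x $ j)"
    using assms by (simp add: hankel_def mult_mat_vec_def scalar_prod_def atLeast0LessThan)
  also have "\<dots> = (\<Sum>j<n. coeff q j * v (j + k))"
    using assms by (simp add: algebra_simps)
  also have "\<dots> = lf v (monom 1 k * q)"
    using lf_monom_mult[OF assms(1)] by simp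
  finally show ?thesis .
qed

lemma lf_nondegenerate_if_det_hankel:
  assumes "det (hankel v n) \<noteq> 0"
  shows "lf_nondegenerate v n"
  unfolding lf_nondegenerate_def
proof (intro allI impI)
  fix q :: "complex poly"
  assume q: "degree q < n" and orth: "\<forall>p. degree p < n \<longrightarrow> lf v (q * p) = 0"
  define x where "x = vec n (coeff q)"
  have "hankel v n *\<^sub>v x = 0\<^sub>v n"
  proof (rule eq_vecI)
    fix k assume "k < dim_vec (0\<^sub>v n :: complex vec)"
    then have k: "k < n" by simp
    have "(hankel v n *\<^sub>v x) $ k = lf v (monom 1 k * q)"
      using q k by (intro hankel_mult_vec_nth) (auto simp: x_def)
    also have "\<dots> = 0"
      using orth[rule_format, of "monom 1 k"] k by (simp add: degree_monom_eq mult.commute)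
    finally show "(hankel v n *\<^sub>v x) $ k = 0\<^sub>v n $ k"
      using k by simp
  qed (simp add: hankel_def)
  moreover have "hankel v n \<in> carrier_mat n n" "x \<in> carrier_vec n"
    by (simp_all add: hankel_def x_def)
  ultimately have "x = 0\<^sub>v n"
    using det_0_iff_vec_prod_zero_field assms by blast
  then have "coeff q j = 0" if "j < n" for j
    using that unfolding x_def by (metis index_vec index_zero_vec(1))
  then show "q = 0"
    by (metis coeff_eq_0 leading_coeff_0_iff linorder_not_le q)
qed

lemma det_hankel_if_lf_nondegenerate:
  assumes "lf_nondegenerate v n"
  shows "det (hankel v n) \<noteq> 0"
proof
  assume "det (hankel v n) = 0"
  then obtain x where x: "x \<in> carrier_vec n" "x \<noteq> 0\<^sub>v n" "hankel v n *\<^sub>v x = 0\<^sub>v n"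
    using det_0_iff_vec_prod_zero_field[of "hankel v n" n] by (auto simp: hankel_def)
  then have n: "n > 0"
    by (auto simp: vec_eq_iff)
  define q where "q = (\<Sum>j<n. monom (x $ j) j)"
  have coeff_q: "coeff q j = (if j < n then x $ j else 0)" for j
    unfolding q_def coeff_sum by (simp add: coeff_monom)
  have "degree q \<le> n - 1"
    by (rule degree_le) (use n in \<open>auto simp: coeff_q\<close>)
  then have deg_q: "degree q < n"
    using n by simp
  have "lf v (q * p) = 0" if p: "degree p < n" for p
  proof -
    have p_sum: "p = (\<Sum>k\<le>n - 1. smult (coeff p k) (monom 1 k))"
      using poly_as_sum_of_monoms'[of p "n - 1"] p by (simp add: smult_monom)
    have "lf v (q * p) = (\<Sum>k\<le>n - 1. coeff p k * lf v (monom 1 k * q))"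
      by (subst p_sum) (simp add: sum_distrib_left lf_sum lf_smult mult.commute mult.left_commute)
    also have "\<dots> = (\<Sum>k\<le>n - 1. coeff p k * (hankel v n *\<^sub>v x) $ k)"
    proof (intro sum.cong refl)
      fix k assume "k \<in> {..n - 1}"
      then have "k < n"
        using n by auto
      then show "coeff p k * lf v (monom 1 k * q) = coeff p k * (hankel v n *\<^sub>v x) $ k"
        using hankel_mult_vec_nth[of q n k x v] x(1) deg_q by (simp add: coeff_q)
    qed
    also have "\<dots> = 0"
      using x n by simp
    finally show ?thesis .
  qed
  then have "q = 0"
    using assms deg_q unfolding lf_nondegenerate_def by blast
  then have "x = 0\<^sub>v n"
    using coeff_q x(1) by (intro eq_vecI) (auto, metis)
  with x show False by simp
qed

lemma quasi_definite_iff_lf_nondegenerate: "quasi_definite v \<longleftrightarrow> (\<forall>n. lf_nondegenerate v n)"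
proof
  assume "quasi_definite v"
  then have "lf_nondegenerate v (Suc n)" for n
    unfolding quasi_definite_def using lf_nondegenerate_if_det_hankel by blast
  moreover have "lf_nondegenerate v 0"
    unfolding lf_nondegenerate_def by simp
  ultimately show "\<forall>n. lf_nondegenerate v n"
    by (metis not0_implies_Suc)
qed (auto simp: quasi_definite_def det_hankel_if_lf_nondegenerate)

lemma degree_less_if_coeff_eq_0: "degree r \<le> d \<Longrightarrow> coeff r d = 0 \<Longrightarrow> r = 0 \<or> degree r < d"
  by (metis le_neq_implies_less leading_coeff_0_iff)

lemma monic_diff_smult_degree_less:
  fixes p Q :: "'a :: comm_ring_1 poly"
  assumes "degree Q = degree p" "lead_coeff Q = 1"
  shows "p - smult (lead_coeff p) Q = 0 \<or> degree (p - smult (lead_coeff p) Q) < degree p"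
proof -
  have "degree (p - smult (lead_coeff p) Q) \<le> degree p"
    using assms degree_smult_le[of "lead_coeff p" Q] by (metis degree_diff_le order_refl)
  moreover have "coeff (p - smult (lead_coeff p) Q) (degree p) = 0"
    using assms by simp
  ultimately show ?thesis
    by (rule degree_less_if_coeff_eq_0)
qed

lemma is_SMOP_degree: "is_SMOP v Q \<Longrightarrow> degree (Q n) = n"
  unfolding is_SMOP_def by blast

lemma is_SMOP_lead_coeff: "is_SMOP v Q \<Longrightarrow> coeff (Q n) n = 1"
  unfolding is_SMOP_def by metis

lemma is_SMOP_norm_nonzero: "is_SMOP v Q \<Longrightarrow> lf v (Q n * Q n) \<noteq> 0"
  unfolding is_SMOP_def by blast

lemma is_SMOP_orthogonal: "is_SMOP v Q \<Longrightarrow> n \<noteq> m \<Longrightarrow> lf v (Q n * Q m) = 0"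
  unfolding is_SMOP_def by blast

lemma is_SMOP_orthogonal_lower_degree:
  assumes Q: "is_SMOP v Q" and p: "p = 0 \<or> degree p < n"
  shows "lf v (Q n * p) = 0"
  using p
proof (induction "degree p" arbitrary: p rule: less_induct)
  case less
  show ?case
  proof (cases "p = 0")
    case False
    define r where "r = p - smult (lead_coeff p) (Q (degree p))"
    have r: "r = 0 \<or> degree r < degree p"
      unfolding r_def using Q
      by (intro monic_diff_smult_degree_less) (simp_all add: is_SMOP_degree is_SMOP_lead_coeff)
    have "lf v (Q n * p) = lead_coeff p * lf v (Q n * Q (degree p)) + lf v (Q n * r)"
      by (simp add: r_def right_diff_distrib lf_diff lf_smult)
    also have "lf v (Q n * Q (degree p)) = 0"
      using Q False less.prems by (intro is_SMOP_orthogonal) auto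
    also have "lf v (Q n * r) = 0"
      using r less.prems False by (cases "r = 0") (auto intro: less.hyps)
    finally show ?thesis by simp
  qed simp
qed

lemma is_SMOP_imp_lf_nondegenerate:
  assumes Q: "is_SMOP v Q"
  shows "lf_nondegenerate v n"
  unfolding lf_nondegenerate_def
proof (intro allI impI; rule ccontr)
  fix q :: "complex poly"
  assume q: "degree q < n" and orth: "\<forall>p. degree p < n \<longrightarrow> lf v (q * p) = 0" and "q \<noteq> 0"
  let ?Qd = "Q (degree q)"
  define r where "r = q - smult (lead_coeff q) ?Qd"
  have r: "r = 0 \<or> degree r < degree q"
    unfolding r_def using Q
    by (intro monic_diff_smult_degree_less) (simp_all add: is_SMOP_degree is_SMOP_lead_coeff)
  have "0 = lf v (q * ?Qd)"
    using orth q Q by (simp add: is_SMOP_degree)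
  also have "\<dots> = lead_coeff q * lf v (?Qd * ?Qd) + lf v (?Qd * r)"
    by (simp add: r_def algebra_simps lf_diff lf_smult)
  also have "lf v (?Qd * r) = 0"
    using Q r by (rule is_SMOP_orthogonal_lower_degree)
  finally have "lead_coeff q = 0"
    using is_SMOP_norm_nonzero[OF Q] by simp
  with \<open>q \<noteq> 0\<close> show False by simp
qed

lemma is_SMOP_imp_quasi_definite: "is_SMOP v Q \<Longrightarrow> quasi_definite v"
  using is_SMOP_imp_lf_nondegenerate quasi_definite_iff_lf_nondegenerate by blast

lemma is_SMOP_unique:
  assumes Q: "is_SMOP v Q" and R: "is_SMOP v R"
  shows "Q = R"
proof
  fix n
  define D where "D = Q n - R n"
  have "degree D \<le> n"
    unfolding D_def using Q R by (intro degree_diff_le) (auto simp: is_SMOP_degree)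
  moreover have "coeff D n = 0"
    unfolding D_def using Q R by (simp add: is_SMOP_lead_coeff)
  ultimately have D: "D = 0 \<or> degree D < n"
    by (rule degree_less_if_coeff_eq_0)
  have "lf v (D * p) = 0" if "degree p < n" for p
    using that is_SMOP_orthogonal_lower_degree[OF Q] is_SMOP_orthogonal_lower_degree[OF R]
    by (simp add: D_def left_diff_distrib lf_diff)
  then have "D = 0"
    using D is_SMOP_imp_lf_nondegenerate[OF Q, of n] unfolding lf_nondegenerate_def by blast
  then show "Q n = R n"
    by (simp add: D_def)
qed

section \<open>The functional \<open>uh\<close> with \<open>u = (x - c)\<^sup>2 uh\<close>\<close>

lemma det_mat_of_rows_list_2:
  "det (mat_of_rows_list 2 [[a, b], [c, d]]) = a * d - b * (c :: 'a :: comm_ring_1)"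
  apply (subst laplace_expansion_row[of _ 2 0])
   apply (auto simp: mat_of_rows_list_def cofactor_def numeral_2_eq_2)
  apply (subst (1 2) det_single)
   apply (auto simp: mat_delete_def)
  done

lemma det_mat_of_rows_list_3:
  "det (mat_of_rows_list 3 [[a, b, c], [d, e, f], [g, h, i]]) =
     a * (e * i - f * h) - b * (d * i - f * g) + c * (d * h - e * (g :: 'a :: comm_ring_1))"
  apply (subst laplace_expansion_row[of _ 3 0])
   apply (auto simp: mat_of_rows_list_def cofactor_def numeral_3_eq_3)
  apply (subst (1 2 3) laplace_expansion_row[of _ 2 0])
      apply (auto simp: mat_delete_def cofactor_def numeral_2_eq_2)
  apply (subst (1 2 3 4 5 6) det_single)
        apply (auto simp: mat_delete_def algebra_simps)
  done

lemma det2_eq_0_imp_kernel: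
  fixes A B C D :: "'a :: comm_ring_1"
  assumes "A * D - B * C = 0"
  obtains y z where "y \<noteq> 0 \<or> z \<noteq> 0" "y * B + z * A = 0" "y * D + z * C = 0"
proof -
  consider "A \<noteq> 0 \<or> B \<noteq> 0" | "C \<noteq> 0 \<or> D \<noteq> 0" | "A = 0" "B = 0" "C = 0" "D = 0"
    by blast
  then show ?thesis
  proof cases
    case 1
    with assms show ?thesis by (intro that[of A "- B"]) (auto simp: algebra_simps)
  next
    case 2
    with assms show ?thesis by (intro that[of C "- D"]) (auto simp: algebra_simps)
  qed (intro that[of 1 0]; simp)
qed

lemma poly_decompose_at_double_root:
  fixes p :: "'a :: field poly"
  obtains k\<^sub>0 k\<^sub>1 r where "p = [:k\<^sub>0:] + smult k\<^sub>1 [:- c, 1:] + [:- c, 1:] ^ 2 * r"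
    and "r = 0 \<or> degree r + 2 = degree p"
proof -
  define L2 where "L2 = [:- c, 1:] ^ 2"
  have L2: "L2 \<noteq> 0" "degree L2 = 2"
    unfolding L2_def by (simp_all add: degree_power_eq)
  define r where "r = p div L2"
  define m where "m = p mod L2"
  have p: "p = L2 * r + m"
    unfolding r_def m_def by (simp add: mult.commute)
  have deg_m: "m = 0 \<or> degree m < 2"
    using degree_mod_less[OF L2(1), of p] L2 by (simp add: m_def)
  have m: "m = [:coeff m 0 + c * coeff m 1:] + smult (coeff m 1) [:- c, 1:]"
  proof (rule poly_eqI)
    fix i
    show "coeff m i = coeff ([:coeff m 0 + c * coeff m 1:] + smult (coeff m 1) [:- c, 1:]) i"
      using coeff_eq_0[of m i] deg_m by (cases i; cases "i - 1") (auto simp: coeff_pCons)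
  qed
  have "r = 0 \<or> degree r + 2 = degree p"
  proof (cases "r = 0")
    case False
    then have deg_L2r: "degree (L2 * r) = degree r + 2"
      using L2 by (simp add: degree_mult_eq)
    then have "degree m < degree (L2 * r)"
      using deg_m by auto
    then show ?thesis
      using p deg_L2r degree_add_eq_left by metis
  qed simp
  then show ?thesis
    using p m by (intro that[of "coeff m 0 + c * coeff m 1" "coeff m 1" r]) (simp_all add: L2_def)
qed

lemma nat_cases_0_1_Suc_Suc [case_names 0 1 ge2]:
  obtains "n = 0" | "n = Suc 0" | m where "n = Suc (Suc m)"
  by (metis not0_implies_Suc)

lemma P1m_Suc_Suc:
  "P1m a b (Suc (Suc n)) = [:- b (Suc n), 1:] * P1m a b (Suc n) - smult (a (Suc n)) (P1m a b n)"
  by (cases n) (simp_all add: P1m_def)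

locale double_geronimus =
  fixes u uh :: "nat \<Rightarrow> complex" and c :: complex
    and P :: "nat \<Rightarrow> complex poly" and a b :: "nat \<Rightarrow> complex"
  assumes smop: "is_SMOP u P"
    and rec0: "[:0, 1:] * P 0 = P 1 + smult (b 0) (P 0)"
    and rec: "\<And>n. [:0, 1:] * P (Suc n) = P (Suc (Suc n)) + smult (b (Suc n)) (P (Suc n))
                      + smult (a (Suc n)) (P n)"
    and rel: "\<And>p. lf u p = lf uh ([:- c, 1:] ^ 2 * p)"
begin

abbreviation "L \<equiv> [:- c, 1:]"
abbreviation "S n \<equiv> poly (Spoly u uh c P a b n) c"
abbreviation "T n \<equiv> Tval u uh c P a b n"
abbreviation "ds n \<equiv> dstar u uh c P a b n"

lemma P_0: "P 0 = 1"
  using is_SMOP_degree[OF smop, of 0] is_SMOP_lead_coeff[OF smop, of 0]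
  by (metis degree_0_id one_pCons)

lemma P_1: "P (Suc 0) = [:- b 0, 1:]"
proof -
  have "[:0, 1:] = P (Suc 0) + [:b 0:]"
    using rec0 by (simp add: P_0)
  then have "P (Suc 0) = [:0, 1:] - [:b 0:]"
    by (metis add_diff_cancel)
  then show ?thesis
    by simp
qed

lemma P_Suc_Suc: "P (Suc (Suc n)) = [:- b (Suc n), 1:] * P (Suc n) - smult (a (Suc n)) (P n)"
  using rec[of n] by (simp add: algebra_simps smult_add_left flip: smult_diff_left)

lemma L_mult_P_Suc:
  "L * P (Suc n) = P (Suc (Suc n)) + smult (b (Suc n) - c) (P (Suc n)) + smult (a (Suc n)) (P n)"
  using rec[of n] by (simp add: algebra_simps smult_diff_left)

lemma Spoly_Suc_Suc:
  "Spoly u uh c P a b (Suc (Suc n)) =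
     [:- b (Suc n), 1:] * Spoly u uh c P a b (Suc n) - smult (a (Suc n)) (Spoly u uh c P a b n)"
proof -
  have "smult k (X * p - smult t q) + smult k' (X * r - smult t s)
      = X * (smult k p + smult k' r) - smult t (smult k q + smult k' s)"
    for k k' t :: complex and X p q r s :: "complex poly"
    by (simp add: algebra_simps smult_add_right smult_diff_right)
  then show ?thesis
    unfolding Spoly_def P_Suc_Suc P1m_Suc_Suc .
qed

lemma S_Suc_Suc: "S (Suc (Suc n)) = (c - b (Suc n)) * S (Suc n) - a (Suc n) * S n"
  by (simp add: Spoly_Suc_Suc algebra_simps)

lemma T_Suc_Suc: "T (Suc (Suc n)) = S (Suc n) + (c - b (Suc n)) * T (Suc n) - a (Suc n) * T n"
proof -
  have pderiv_step: "pderiv ([:x, 1:] * p - smult t q) = [:x, 1:] * pderiv p + p - smult t (pderiv q)"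
    for x t :: complex and p q :: "complex poly"
    unfolding pderiv_diff pderiv_mult pderiv_smult by (simp add: pderiv_pCons algebra_simps)
  show ?thesis
    unfolding Tval_def Spoly_Suc_Suc[of n] pderiv_step P_Suc_Suc[of n] by (simp add: algebra_simps)
qed

lemma lf_uh_L_mult_P: "lf uh (L * P n) = S n"
proof (induction n rule: induct_nat_012)
  case 0
  then show ?case
    by (simp add: P_0 lf_linear Spoly_def P1m_def algebra_simps)
next
  case 1
  have L_mult_P_1: "L * P (Suc 0) = L ^ 2 + smult (c - b 0) L"
    by (simp add: P_1 algebra_simps power2_eq_square)
  have "lf uh (L * P (Suc 0)) = u 0 + (c - b 0) * lf uh L"
    unfolding L_mult_P_1 lf_add lf_smult using rel[of 1] by simp
  then show ?case
    by (simp add: P_1 lf_linear Spoly_def P1m_def algebra_simps)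
next
  case (ge2 n)
  have "0 = lf u (P (Suc n))"
    using is_SMOP_orthogonal_lower_degree[OF smop, of 1 "Suc n"] by simp
  also have "\<dots> = lf uh (L * (L * P (Suc n)))"
    by (simp only: rel power2_eq_square mult.assoc)
  also have "L * (L * P (Suc n))
      = L * P (Suc (Suc n)) + smult (b (Suc n) - c) (L * P (Suc n)) + smult (a (Suc n)) (L * P n)"
    by (simp only: L_mult_P_Suc[of n] distrib_left mult_smult_right)
  also have "lf uh \<dots> = lf uh (L * P (Suc (Suc n))) + (b (Suc n) - c) * S (Suc n) + a (Suc n) * S n"
    by (simp only: lf_add lf_smult ge2.IH)
  finally show ?case
    using S_Suc_Suc[of n] by (simp add: algebra_simps)
qed

lemma lf_uh_P: "lf uh (P n) = T n"
proof (induction n rule: induct_nat_012)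
  case (ge2 n)
  have "S (Suc n) = lf uh (P (Suc (Suc n))) + (b (Suc n) - c) * T (Suc n) + a (Suc n) * T n"
    unfolding lf_uh_L_mult_P[of "Suc n", symmetric] L_mult_P_Suc
    by (simp add: lf_add lf_smult ge2.IH)
  then show ?case
    using T_Suc_Suc[of n] by (simp add: algebra_simps)
qed (simp_all add: P_0 P_1 lf_linear pderiv_pCons Tval_def Spoly_def P1m_def algebra_simps)

lemma lf_uh_orthogonal_if_moments:
  assumes "2 \<le> n" "lf uh q = 0" "lf uh (q * L) = 0"
    and "\<And>r. degree r < n - 2 \<Longrightarrow> lf u (q * r) = 0"
    and "degree p < n"
  shows "lf uh (q * p) = 0"
proof -
  obtain k\<^sub>0 k\<^sub>1 r where p: "p = [:k\<^sub>0:] + smult k\<^sub>1 L + L ^ 2 * r"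
    and r: "r = 0 \<or> degree r + 2 = degree p"
    by (rule poly_decompose_at_double_root)
  have "lf u (q * r) = 0"
    using r assms by (cases "r = 0") auto
  moreover have "q * ([:k\<^sub>0:] + smult k\<^sub>1 X + X ^ 2 * r)
      = smult k\<^sub>0 q + smult k\<^sub>1 (q * X) + X ^ 2 * (q * r)"
    for X :: "complex poly"
    by (simp add: algebra_simps)
  ultimately show ?thesis
    using assms by (simp only: p lf_add lf_smult rel) simp
qed

definition Pcomb :: "nat \<Rightarrow> complex \<Rightarrow> complex \<Rightarrow> complex \<Rightarrow> complex poly" where
  "Pcomb m x y z = smult x (P (Suc (Suc m))) + smult y (P (Suc m)) + smult z (P m)"

lemma degree_Pcomb: "degree (Pcomb m x y z) \<le> Suc (Suc m)"
  unfolding Pcomb_def using is_SMOP_degree[OF smop]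
  by (intro degree_add_le degree_smult_le[THEN order_trans]) auto

lemma coeff_Pcomb_top: "coeff (Pcomb m x y z) (Suc (Suc m)) = x"
  unfolding Pcomb_def using is_SMOP_degree[OF smop] is_SMOP_lead_coeff[OF smop]
  by (simp add: coeff_eq_0)

lemma Pcomb_eq_0_iff: "Pcomb m x y z = 0 \<longleftrightarrow> x = 0 \<and> y = 0 \<and> z = 0"
proof
  assume 0: "Pcomb m x y z = 0"
  then have x: "x = 0"
    using coeff_Pcomb_top[of m x y z] by simp
  have "coeff (Pcomb m x y z) (Suc m) = y"
    using x is_SMOP_degree[OF smop] is_SMOP_lead_coeff[OF smop] by (simp add: Pcomb_def coeff_eq_0)
  then have y: "y = 0"
    using 0 by simp
  have "coeff (Pcomb m x y z) m = z"
    using x y is_SMOP_lead_coeff[OF smop] by (simp add: Pcomb_def)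
  then show "x = 0 \<and> y = 0 \<and> z = 0"
    using 0 x y by simp
qed (simp add: Pcomb_def)

lemma Pcomb_lf_uh_orthogonal:
  assumes "x * T (Suc (Suc m)) + y * T (Suc m) + z * T m = 0"
    and "x * S (Suc (Suc m)) + y * S (Suc m) + z * S m = 0"
    and "degree p < Suc (Suc m)"
  shows "lf uh (Pcomb m x y z * p) = 0"
proof (rule lf_uh_orthogonal_if_moments[of "Suc (Suc m)"])
  show "lf uh (Pcomb m x y z) = 0"
    using assms(1) by (simp add: Pcomb_def lf_add lf_smult lf_uh_P)
  have "(smult x A + smult y B + smult z C) * X = smult x (X * A) + smult y (X * B) + smult z (X * C)"
    for A B C X :: "complex poly"
    by (simp add: algebra_simps)
  then show "lf uh (Pcomb m x y z * L) = 0"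
    using assms(2) unfolding Pcomb_def by (simp only: lf_add lf_smult lf_uh_L_mult_P)
  show "lf u (Pcomb m x y z * r) = 0" if "degree r < Suc (Suc m) - 2" for r
    using that is_SMOP_orthogonal_lower_degree[OF smop, of r "Suc (Suc m)"]
      is_SMOP_orthogonal_lower_degree[OF smop, of r "Suc m"] is_SMOP_orthogonal_lower_degree[OF smop, of r m]
    by (auto simp: Pcomb_def distrib_right lf_add lf_smult)
qed (use assms in auto)

lemma dstar_Suc_Suc: "ds (Suc (Suc m)) = S m * T (Suc m) - S (Suc m) * T m"
  unfolding dstar_def by (simp add: det_mat_of_rows_list_2)

lemma uh_0_nonzero_if_quasi_definite:
  assumes "quasi_definite uh"
  shows "uh 0 \<noteq> 0"
proof
  assume "uh 0 = 0"
  then have "lf uh (1 * p) = 0" if "degree p < 1" for p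
    using that by (metis degree_0_id less_one lf_const mult_1 mult_zero_right)
  moreover have "lf_nondegenerate uh 1"
    using assms quasi_definite_iff_lf_nondegenerate by blast
  ultimately have "(1 :: complex poly) = 0"
    unfolding lf_nondegenerate_def by (metis degree_1 less_one)
  then show False by simp
qed

lemma dstar_nonzero_if_quasi_definite:
  assumes "quasi_definite uh"
  shows "ds (Suc (Suc m)) \<noteq> 0"
proof
  assume "ds (Suc (Suc m)) = 0"
  then obtain y z where yz: "y \<noteq> 0 \<or> z \<noteq> 0"
    "y * S (Suc m) + z * S m = 0" "y * T (Suc m) + z * T m = 0"
    using det2_eq_0_imp_kernel[of "S m" "T (Suc m)" "S (Suc m)" "T m"] dstar_Suc_Suc[of m] by auto
  let ?q = "Pcomb m 0 y z"
  have "?q = 0 \<or> degree ?q < Suc (Suc m)"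
    using degree_Pcomb coeff_Pcomb_top by (intro degree_less_if_coeff_eq_0) auto
  moreover have "lf uh (?q * p) = 0" if "degree p < Suc (Suc m)" for p
    using yz that by (intro Pcomb_lf_uh_orthogonal) auto
  moreover have "lf_nondegenerate uh (Suc (Suc m))"
    using assms quasi_definite_iff_lf_nondegenerate by blast
  ultimately have "?q = 0"
    unfolding lf_nondegenerate_def by auto
  with yz(1) show False
    by (simp add: Pcomb_eq_0_iff)
qed

abbreviation "\<alpha> m \<equiv> (S (Suc (Suc m)) * T m - S m * T (Suc (Suc m))) / ds (Suc (Suc m))"
abbreviation "\<beta> m \<equiv> (S (Suc m) * T (Suc (Suc m)) - S (Suc (Suc m)) * T (Suc m)) / ds (Suc (Suc m))"

lemma Qhat_Suc_Suc:
  assumes "ds (Suc (Suc m)) \<noteq> 0"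
  shows "Qhat u uh c P a b (Suc (Suc m)) = Pcomb m 1 (\<alpha> m) (\<beta> m)"
proof -
  have "Qhat u uh c P a b (Suc (Suc m)) = smult (1 / ds (Suc (Suc m)))
     (smult (ds (Suc (Suc m))) (P (Suc (Suc m)))
      - smult (S m * T (Suc (Suc m)) - S (Suc (Suc m)) * T m) (P (Suc m))
      + smult (S (Suc m) * T (Suc (Suc m)) - S (Suc (Suc m)) * T (Suc m)) (P m))"
    unfolding Qhat_def dstar_Suc_Suc by (simp add: det_mat_of_rows_list_3 mult.commute[of _ "[:_:]"])
  also have "\<dots> = Pcomb m 1 (\<alpha> m) (\<beta> m)"
    using assms unfolding Pcomb_def by (intro poly_eqI) (simp add: field_simps)
  finally show ?thesis .
qed

lemma beta_eq: "ds (Suc (Suc m)) \<noteq> 0 \<Longrightarrow> \<beta> m = ds (Suc (Suc (Suc m))) / ds (Suc (Suc m))"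
  using dstar_Suc_Suc[of "Suc m"] by simp

lemma Qhat_Suc_Suc_degree:
  assumes "ds (Suc (Suc m)) \<noteq> 0"
  shows "degree (Qhat u uh c P a b (Suc (Suc m))) = Suc (Suc m)"
    and "coeff (Qhat u uh c P a b (Suc (Suc m))) (Suc (Suc m)) = 1"
  using degree_Pcomb coeff_Pcomb_top
  by (simp_all add: Qhat_Suc_Suc[OF assms] le_antisym le_degree)

lemma Qhat_Suc_Suc_orthogonal:
  assumes "ds (Suc (Suc m)) \<noteq> 0" "degree p < Suc (Suc m)"
  shows "lf uh (Qhat u uh c P a b (Suc (Suc m)) * p) = 0"
  unfolding Qhat_Suc_Suc[OF assms(1)]
  using assms unfolding dstar_Suc_Suc by (intro Pcomb_lf_uh_orthogonal) (simp_all add: field_simps)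

lemma Qhat_Suc_Suc_norm:
  assumes "ds (Suc (Suc m)) \<noteq> 0" "ds (Suc (Suc (Suc m))) \<noteq> 0"
  shows "lf uh (Qhat u uh c P a b (Suc (Suc m)) * Qhat u uh c P a b (Suc (Suc m))) \<noteq> 0"
proof -
  let ?Q = "Qhat u uh c P a b (Suc (Suc m))"
  let ?R = "L ^ 2 * P m"
  have L2: "L ^ 2 \<noteq> 0" "degree (L ^ 2) = 2"
    by (simp_all add: degree_power_eq)
  have "lead_coeff (L ^ 2) = 1"
    by (simp only: lead_coeff_power) simp
  have "P m \<noteq> 0"
    using is_SMOP_lead_coeff[OF smop, of m] by auto
  then have deg_R: "degree ?R = Suc (Suc m)"
    using L2 by (simp add: degree_mult_eq is_SMOP_degree[OF smop])
  have lc_R: "coeff ?R (Suc (Suc m)) = 1"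
    using \<open>lead_coeff (L ^ 2) = 1\<close> deg_R lead_coeff_mult[of "L ^ 2" "P m"]
    by (simp add: is_SMOP_degree[OF smop] is_SMOP_lead_coeff[OF smop])
  have "?Q - ?R = 0 \<or> degree (?Q - ?R) < Suc (Suc m)"
    using Qhat_Suc_Suc_degree[OF assms(1)] deg_R lc_R
    by (intro degree_less_if_coeff_eq_0 degree_diff_le) auto
  then have "lf uh (?Q * (?Q - ?R)) = 0"
    using Qhat_Suc_Suc_orthogonal[OF assms(1)] by auto
  then have "lf uh (?Q * ?Q) = lf uh (L ^ 2 * (?Q * P m))"
    by (simp add: right_diff_distrib lf_diff mult.left_commute)
  also have "\<dots> = \<beta> m * lf u (P m * P m)"
    using is_SMOP_orthogonal[OF smop, of "Suc (Suc m)" m] is_SMOP_orthogonal[OF smop, of "Suc m" m]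
    by (simp add: rel[symmetric] Qhat_Suc_Suc[OF assms(1)] Pcomb_def distrib_right lf_add lf_smult)
  finally show ?thesis
    using assms beta_eq is_SMOP_norm_nonzero[OF smop, of m] by simp
qed

lemma Qhat_1: "Qhat u uh c P a b (Suc 0) = [:- (uh 1 / uh 0), 1:]"
  unfolding Qhat_def by simp

lemma Qhat_1_norm:
  assumes "uh 0 \<noteq> 0"
  shows "lf uh (Qhat u uh c P a b (Suc 0) * Qhat u uh c P a b (Suc 0)) * uh 0 = - ds (Suc (Suc 0))"
proof -
  have "ds (Suc (Suc 0)) = lf uh (L * P 0) * lf uh (P (Suc 0)) - lf uh (L * P (Suc 0)) * lf uh (P 0)"
    unfolding dstar_Suc_Suc lf_uh_L_mult_P lf_uh_P ..
  also have "L * P (Suc 0) = [:c * b 0, - c - b 0, 1:]"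
    by (simp add: P_1)
  also have "L * P 0 = [:- c, 1:]"
    by (simp add: P_0)
  finally have ds_2: "ds (Suc (Suc 0)) = (uh 1 - c * uh 0) * (uh 1 - b 0 * uh 0)
      - (c * b 0 * uh 0 - (c + b 0) * uh 1 + uh 2) * uh 0"
    by (simp add: P_0 P_1 lf_linear lf_quadratic algebra_simps)
  have "Qhat u uh c P a b (Suc 0) * Qhat u uh c P a b (Suc 0)
      = [:(uh 1 / uh 0) * (uh 1 / uh 0), - 2 * (uh 1 / uh 0), 1:]"
    by (simp add: Qhat_1)
  then have "lf uh (Qhat u uh c P a b (Suc 0) * Qhat u uh c P a b (Suc 0))
      = (uh 1 / uh 0) * (uh 1 / uh 0) * uh 0 - 2 * (uh 1 / uh 0) * uh 1 + uh 2"
    by (simp add: lf_quadratic)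
  then show ?thesis
    unfolding ds_2 using assms by (simp add: field_simps)
qed

lemma Qhat_is_SMOP:
  assumes "uh 0 \<noteq> 0" and ds_nonzero: "\<And>m. ds (Suc (Suc m)) \<noteq> 0"
  shows "is_SMOP uh (Qhat u uh c P a b)"
proof -
  let ?Q = "Qhat u uh c P a b"
  have monic: "degree (?Q n) = n \<and> lead_coeff (?Q n) = 1" for n
    using Qhat_Suc_Suc_degree[OF ds_nonzero]
    by (cases n rule: nat_cases_0_1_Suc_Suc) (simp_all add: Qhat_def)
  have orth: "lf uh (?Q n * p) = 0" if "degree p < n" for n p
  proof (cases n rule: nat_cases_0_1_Suc_Suc)
    case 1
    then have p: "p = [:coeff p 0:]"
      using that by (simp add: degree_0_id)
    have "?Q (Suc 0) * [:coeff p 0:] = smult (coeff p 0) (?Q (Suc 0))"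
      by simp
    then show ?thesis
      using 1 \<open>uh 0 \<noteq> 0\<close> by (subst p) (simp add: lf_smult Qhat_1 lf_linear field_simps)
  qed (use that Qhat_Suc_Suc_orthogonal[OF ds_nonzero] in simp_all)
  have "lf uh (?Q n * ?Q n) \<noteq> 0" for n
  proof (cases n rule: nat_cases_0_1_Suc_Suc)
    case 1
    then show ?thesis
      using Qhat_1_norm[OF \<open>uh 0 \<noteq> 0\<close>] ds_nonzero[of 0] by auto
  qed (use \<open>uh 0 \<noteq> 0\<close> Qhat_Suc_Suc_norm[OF ds_nonzero ds_nonzero]
      in \<open>simp_all add: Qhat_def\<close>)
  moreover have "lf uh (?Q n * ?Q m) = 0" if "n \<noteq> m" for n m
    using that orth[of "?Q m" n] orth[of "?Q n" m] monic
    by (cases "m < n") (simp_all add: mult.commute)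
  ultimately show ?thesis
    unfolding is_SMOP_def using monic by blast
qed

end

theorem mainTheorem3:
  fixes u uh :: "nat \<Rightarrow> complex" and c :: complex
    and P :: "nat \<Rightarrow> complex poly" and a b :: "nat \<Rightarrow> complex"
  assumes qd: "quasi_definite u"
    and smop: "is_SMOP u P"
    and rec0: "[:0, 1:] * P 0 = P 1 + smult (b 0) (P 0)"
    and rec: "\<And>n. [:0, 1:] * P (Suc n) = P (Suc (Suc n)) + smult (b (Suc n)) (P (Suc n))
                      + smult (a (Suc n)) (P n)"
    and anz: "\<And>n. n \<ge> 1 \<Longrightarrow> a n \<noteq> 0"
    and rel: "\<And>p. lf u p = lf uh ([:- c, 1:] ^ 2 * p)"
  shows "(quasi_definite uh \<longleftrightarrow>
            (uh 0 \<noteq> 0 \<and> (\<forall>n\<ge>2. dstar u uh c P a b n \<noteq> 0)))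
       \<and> (quasi_definite uh \<longrightarrow>
            (\<forall>Q. is_SMOP uh Q \<longleftrightarrow> Q = Qhat u uh c P a b))"
proof -
  interpret double_geronimus u uh c P a b
    using smop rec0 rec rel by unfold_locales
  have dstar_Suc_Suc_iff: "(\<forall>n\<ge>2. ds n \<noteq> 0) \<longleftrightarrow> (\<forall>m. ds (Suc (Suc m)) \<noteq> 0)"
    by (metis add_2_eq_Suc le_Suc_ex le_add1)
  have necessary: "uh 0 \<noteq> 0 \<and> (\<forall>n\<ge>2. ds n \<noteq> 0)" if "quasi_definite uh"
    using that uh_0_nonzero_if_quasi_definite dstar_nonzero_if_quasi_definite dstar_Suc_Suc_iff
    by blast
  have sufficient: "is_SMOP uh (Qhat u uh c P a b)" if "uh 0 \<noteq> 0 \<and> (\<forall>n\<ge>2. ds n \<noteq> 0)"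
    using that Qhat_is_SMOP dstar_Suc_Suc_iff by blast
  show ?thesis
    using necessary sufficient is_SMOP_imp_quasi_definite is_SMOP_unique by blast
qed

end
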